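(* Let $\beta>1$ be a real number. If every $x\in I_\beta\cap\mathbb{Q}(\beta)$ has an eventually periodic $(-\beta)$-expansion $d_{-\beta}(x)$, then $\beta$ is either a Pisot number or a Salem number.
   Context: For $\beta>1$ put $l_\beta=-\frac{\beta}{\beta+1}$, $r_\beta=\frac{1}{\beta+1}$ and $I_\beta=[l_\beta,r_\beta)$. Define $T:I_\beta\to I_\beta$ by $T(x)=-\beta x-\lfloor -\beta x-l_\beta\rfloor$. The $(-\beta)$-expansion of $x\in I_\beta$ is the infinite word $d_{-\beta}(x)=x_1x_2x_3\cdots$ with $x_i=\lfloor -\beta T^{i-1}(x)-l_\beta\rfloor$ for $i\ge1$; then $x=\sum_{i\ge1}x_i(-\beta)^{-i}$. $\mathbb{Q}(\beta)$ denotes the smallest subfield of $\mathbb{C}$ containing $\beta$. A Pisot number is an algebraic integer $\beta>1$ all of whose other conjugates have modulus $<1$; a Salem number is an algebraic integer $\beta>1$ all of whose other conjugates have modulus $\le1$ and which is not a Pisot number. *)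

theory Defs
  imports Complex_Main "HOL-Computational_Algebra.Polynomial_Factorial"
begin

definition lbeta :: "real \<Rightarrow> real" where
  "lbeta \<beta> = - \<beta> / (\<beta> + 1)"

definition rbeta :: "real \<Rightarrow> real" where
  "rbeta \<beta> = 1 / (\<beta> + 1)"

definition Ibeta :: "real \<Rightarrow> real set" where
  "Ibeta \<beta> = {lbeta \<beta> ..< rbeta \<beta>}"

definition negbeta_T :: "real \<Rightarrow> real \<Rightarrow> real" where
  "negbeta_T \<beta> x = - \<beta> * x - of_int \<lfloor>- \<beta> * x - lbeta \<beta>\<rfloor>"

text \<open>Digit sequence: negbeta_digits beta x i is the digit x_(i+1) of the
  (-beta)-expansion, i.e. floor(-beta T^i(x) - l_beta).\<close>
definition negbeta_digits :: "real \<Rightarrow> real \<Rightarrow> nat \<Rightarrow> int" where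
  "negbeta_digits \<beta> x i = \<lfloor>- \<beta> * ((negbeta_T \<beta> ^^ i) x) - lbeta \<beta>\<rfloor>"

definition eventually_periodic :: "(nat \<Rightarrow> 'a) \<Rightarrow> bool" where
  "eventually_periodic d \<longleftrightarrow> (\<exists>n p. p > 0 \<and> (\<forall>i\<ge>n. d (i + p) = d i))"

definition is_subfield :: "complex set \<Rightarrow> bool" where
  "is_subfield S \<longleftrightarrow> 0 \<in> S \<and> 1 \<in> S \<and> (\<forall>x\<in>S. \<forall>y\<in>S. x + y \<in> S \<and> x * y \<in> S)
     \<and> (\<forall>x\<in>S. - x \<in> S) \<and> (\<forall>x\<in>S. x \<noteq> 0 \<longrightarrow> inverse x \<in> S)"

definition field_gen :: "complex \<Rightarrow> complex set" where
  "field_gen b = \<Inter>{S. is_subfield S \<and> b \<in> S}"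

definition algebraic_integer :: "complex \<Rightarrow> bool" where
  "algebraic_integer z \<longleftrightarrow> (\<exists>p :: int poly. lead_coeff p = 1 \<and> poly (map_poly of_int p) z = 0)"

definition is_min_poly :: "complex \<Rightarrow> rat poly \<Rightarrow> bool" where
  "is_min_poly z p \<longleftrightarrow> lead_coeff p = 1 \<and> irreducible p \<and> poly (map_poly of_rat p) z = 0"

definition conjugates :: "complex \<Rightarrow> complex set" where
  "conjugates z = {w. \<exists>p. is_min_poly z p \<and> poly (map_poly of_rat p) w = 0}"

definition pisot :: "real \<Rightarrow> bool" where
  "pisot b \<longleftrightarrow> b > 1 \<and> algebraic_integer (of_real b) \<and>
     (\<forall>w\<in>conjugates (of_real b) - {of_real b}. cmod w < 1)"

definition salem :: "real \<Rightarrow> bool" where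
  "salem b \<longleftrightarrow> b > 1 \<and> algebraic_integer (of_real b) \<and>
     (\<forall>w\<in>conjugates (of_real b) - {of_real b}. cmod w \<le> 1) \<and> \<not> pisot b"

end

theory Submission
  imports Defs "HOL-Computational_Algebra.Field_as_Ring"
begin

text \<open>
  For integers a, b the orbit of x = a + b\<beta> under T stays in \<int>[\<beta>]: T^m(x) = P_m(\<beta>) with
  P_0 = a + bX and P_(m+1) = -(x_(m+1) + X P_m), a polynomial of degree m + 1 with leading
  coefficient +-b. Periodicity of the digits forces the orbit itself to be periodic, since two
  orbits with the same digits separate by the factor \<beta> at each step while staying in a bounded
  interval. Hence P_(n+p) - P_n has the root \<beta>; for b = 1 it is monic up to sign, so \<beta> is an
  algebraic integer. A conjugate w is a root of the same polynomial, so P_m(w) is eventually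
  periodic and obeys the same recurrence with bounded digits; if |w| > 1 this bounds |P_m(w)| by
  (\<beta> + 1)/(|w| - 1) uniformly in b. But P_0(w) = x + b(w - \<beta>) grows linearly in b, so |w| <= 1.
\<close>

section \<open>The (-\<beta>)-transformation\<close>

lemma lbeta_rbeta_bounds:
  assumes "\<beta> > 1"
  shows "rbeta \<beta> = lbeta \<beta> + 1" "-1 < lbeta \<beta>" "lbeta \<beta> < 0"
  using assms by (auto simp: lbeta_def rbeta_def field_simps)

lemma negbeta_T_mem_Ibeta:
  assumes "\<beta> > 1"
  shows "negbeta_T \<beta> y \<in> Ibeta \<beta>"
proof -
  let ?u = "- \<beta> * y - lbeta \<beta>"
  have "negbeta_T \<beta> y = (?u - of_int \<lfloor>?u\<rfloor>) + lbeta \<beta>"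
    unfolding negbeta_T_def by simp
  moreover have "of_int \<lfloor>?u\<rfloor> \<le> ?u" "?u < of_int \<lfloor>?u\<rfloor> + 1"
    by linarith+
  ultimately show ?thesis
    using lbeta_rbeta_bounds[OF assms] unfolding Ibeta_def atLeastLessThan_iff by linarith
qed

lemma funpow_negbeta_T_mem_Ibeta:
  assumes "\<beta> > 1" "x \<in> Ibeta \<beta>"
  shows "(negbeta_T \<beta> ^^ m) x \<in> Ibeta \<beta>"
  using assms by (cases m) (auto simp: negbeta_T_mem_Ibeta)

lemma abs_le_1_if_mem_Ibeta:
  assumes "\<beta> > 1" "y \<in> Ibeta \<beta>"
  shows "\<bar>y\<bar> \<le> 1"
  using assms lbeta_rbeta_bounds[OF assms(1)] unfolding Ibeta_def by auto

lemma exists_int_add_mem_Ibeta: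
  assumes "\<beta> > 1"
  shows "\<exists>a::int. of_int a + y \<in> Ibeta \<beta>"
proof
  let ?a = "\<lceil>lbeta \<beta> - y\<rceil>"
  have "lbeta \<beta> - y \<le> of_int ?a" "of_int ?a < lbeta \<beta> - y + 1"
    by (rule le_of_int_ceiling) linarith
  then show "of_int ?a + y \<in> Ibeta \<beta>"
    using lbeta_rbeta_bounds[OF assms] unfolding Ibeta_def atLeastLessThan_iff by linarith
qed

lemma funpow_negbeta_T_Suc:
  "(negbeta_T \<beta> ^^ Suc m) x = - \<beta> * (negbeta_T \<beta> ^^ m) x - of_int (negbeta_digits \<beta> x m)"
  by (simp add: negbeta_T_def negbeta_digits_def)

lemma abs_negbeta_digits_le:
  assumes "\<beta> > 1" "x \<in> Ibeta \<beta>"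
  shows "\<bar>of_int (negbeta_digits \<beta> x m)\<bar> \<le> \<beta> + 1"
proof -
  let ?y = "(negbeta_T \<beta> ^^ m) x" and ?y' = "(negbeta_T \<beta> ^^ Suc m) x"
  have "\<bar>?y\<bar> \<le> 1" "\<bar>?y'\<bar> \<le> 1"
    using abs_le_1_if_mem_Ibeta[OF assms(1) funpow_negbeta_T_mem_Ibeta[OF assms]] by blast+
  then have "\<bar>\<beta> * ?y\<bar> \<le> \<beta>" "\<bar>?y'\<bar> \<le> 1"
    using assms(1) by (simp_all add: abs_mult mult_left_le)
  moreover have "of_int (negbeta_digits \<beta> x m) = - (\<beta> * ?y) - ?y'"
    using funpow_negbeta_T_Suc[where \<beta> = \<beta> and m = m and x = x] by simp
  ultimately show ?thesis by linarith
qed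

lemma bounded_expanding_seq_eq_0:
  fixes z :: "nat \<Rightarrow> real"
  assumes "\<bar>c\<bar> > 1" "\<And>k. z (Suc k) = c * z k" "\<And>k. \<bar>z k\<bar> \<le> C"
  shows "z 0 = 0"
proof (rule ccontr)
  assume "z 0 \<noteq> 0"
  have z_pow: "z k = c ^ k * z 0" for k
    by (induction k) (simp_all add: assms(2))
  obtain k where "C / \<bar>z 0\<bar> < \<bar>c\<bar> ^ k"
    using real_arch_pow[OF assms(1)] by blast
  then have "C < \<bar>c\<bar> ^ k * \<bar>z 0\<bar>"
    using \<open>z 0 \<noteq> 0\<close> by (simp add: divide_less_eq)
  also have "\<dots> = \<bar>z k\<bar>"
    by (simp add: z_pow[of k] abs_mult power_abs)
  finally show False using assms(3)[of k] by simp
qed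

lemma funpow_negbeta_T_periodic:
  assumes "\<beta> > 1" "x \<in> Ibeta \<beta>"
    and "\<forall>i\<ge>n. negbeta_digits \<beta> x (i + p) = negbeta_digits \<beta> x i"
  shows "(negbeta_T \<beta> ^^ (n + p)) x = (negbeta_T \<beta> ^^ n) x"
proof -
  define z where "z k = (negbeta_T \<beta> ^^ (n + p + k)) x - (negbeta_T \<beta> ^^ (n + k)) x" for k
  have "z (Suc k) = - \<beta> * z k" for k
    using funpow_negbeta_T_Suc[where \<beta> = \<beta> and m = "n + p + k" and x = x]
      funpow_negbeta_T_Suc[where \<beta> = \<beta> and m = "n + k" and x = x]
      assms(3)[rule_format, of "n + k"]
    unfolding z_def by (simp add: algebra_simps)
  moreover have "\<bar>z k\<bar> \<le> 2" for k
    using abs_le_1_if_mem_Ibeta[OF assms(1) funpow_negbeta_T_mem_Ibeta[OF assms(1,2)], of "n + p + k"]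
      abs_le_1_if_mem_Ibeta[OF assms(1) funpow_negbeta_T_mem_Ibeta[OF assms(1,2)], of "n + k"]
    unfolding z_def by linarith
  ultimately have "z 0 = 0"
    using assms(1) by (intro bounded_expanding_seq_eq_0[where c = "- \<beta>" and C = 2]) auto
  then show ?thesis unfolding z_def by simp
qed

section \<open>Orbit polynomials\<close>

fun orbit_poly :: "int \<Rightarrow> int \<Rightarrow> (nat \<Rightarrow> int) \<Rightarrow> nat \<Rightarrow> 'a::comm_ring_1 poly" where
  "orbit_poly a b d 0 = [:of_int a, of_int b:]"
| "orbit_poly a b d (Suc m) = - pCons (of_int (d m)) (orbit_poly a b d m)"

lemma coeff_orbit_poly:
  "coeff (orbit_poly a b d m :: 'a::comm_ring_1 poly) k = of_int (coeff (orbit_poly a b d m :: int poly) k)"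
  by (induction m arbitrary: k) (auto simp: coeff_pCons split: nat.split)

lemma map_poly_of_int_orbit_poly:
  "map_poly of_int (orbit_poly a b d m - orbit_poly a b d n :: int poly) =
     (orbit_poly a b d m - orbit_poly a b d n :: 'a::comm_ring_1 poly)"
  by (intro poly_eqI) (simp add: coeff_map_poly coeff_orbit_poly[where 'a='a])

lemma degree_orbit_poly:
  assumes "b \<noteq> 0"
  shows "degree (orbit_poly a b d m :: int poly) = m + 1 \<and>
         lead_coeff (orbit_poly a b d m :: int poly) = (-1) ^ m * b"
  using assms by (induction m) (auto simp: degree_pCons_eq)

lemma lead_coeff_orbit_poly_diff:
  assumes "b \<noteq> 0" "k > 0"
  shows "lead_coeff (orbit_poly a b d (m + k) - orbit_poly a b d m :: int poly) = (-1) ^ (m + k) * b"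
proof -
  have "degree (- orbit_poly a b d m :: int poly) < degree (orbit_poly a b d (m + k) :: int poly)"
    using degree_orbit_poly[OF assms(1), of a d] assms(2) by simp
  then show ?thesis
    using lead_coeff_add_le degree_orbit_poly[OF assms(1)]
    by (metis add.commute diff_conv_add_uminus)
qed

lemma poly_orbit_poly_negbeta:
  assumes "x = of_int a + of_int b * \<beta>"
  shows "poly (orbit_poly a b (negbeta_digits \<beta> x) m) (complex_of_real \<beta>) =
         complex_of_real ((negbeta_T \<beta> ^^ m) x)"
  by (induction m) (simp_all del: funpow.simps add: assms funpow_negbeta_T_Suc algebra_simps)

lemma orbit_poly_negbeta_root:
  assumes "\<beta> > 1" "x = of_int a + of_int b * \<beta>" "x \<in> Ibeta \<beta>"
    and "eventually_periodic (negbeta_digits \<beta> x)"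
  obtains n p where "p > 0" "\<forall>i\<ge>n. negbeta_digits \<beta> x (i + p) = negbeta_digits \<beta> x i"
    "poly (orbit_poly a b (negbeta_digits \<beta> x) (n + p) - orbit_poly a b (negbeta_digits \<beta> x) n)
       (complex_of_real \<beta>) = 0"
proof -
  obtain n p where np: "p > 0" "\<forall>i\<ge>n. negbeta_digits \<beta> x (i + p) = negbeta_digits \<beta> x i"
    using assms(4) unfolding eventually_periodic_def by blast
  with that show ?thesis
    using funpow_negbeta_T_periodic[OF assms(1,3) np(2)] by (simp add: poly_orbit_poly_negbeta[OF assms(2)])
qed

section \<open>Algebraic integers and conjugates\<close>

lemma algebraic_integerI_unit_lead_coeff:
  fixes p :: "int poly"
  assumes "is_unit (lead_coeff p)" "poly (map_poly of_int p) z = 0"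
  shows "algebraic_integer z"
proof -
  have "lead_coeff p * lead_coeff p = 1"
    using assms(1) by (metis abs_mult_self_eq mult_1 zdvd1_eq)
  then have "lead_coeff (smult (lead_coeff p) p) = 1" by (simp only: lead_coeff_smult)
  moreover have "poly (map_poly of_int (smult (lead_coeff p) p)) z = 0"
    using assms(2) by (simp add: map_poly_smult)
  ultimately show ?thesis unfolding algebraic_integer_def by blast
qed

lemma map_poly_of_rat_add:
  "map_poly (of_rat :: rat \<Rightarrow> 'a::field_char_0) (p + q) = map_poly of_rat p + map_poly of_rat q"
  by (intro poly_eqI) (simp add: coeff_map_poly of_rat_add)

lemma map_poly_of_rat_mult:
  "map_poly (of_rat :: rat \<Rightarrow> 'a::field_char_0) (p * q) = map_poly of_rat p * map_poly of_rat q"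
  by (intro poly_eqI) (simp add: coeff_map_poly coeff_mult of_rat_sum of_rat_mult)

lemma poly_conjugate_eq_0:
  assumes "w \<in> conjugates z" "poly (map_poly of_rat r) z = 0"
  shows "poly (map_poly of_rat r) w = 0"
proof -
  obtain q where q: "is_min_poly z q" "poly (map_poly of_rat q) w = 0"
    using assms(1) unfolding conjugates_def by blast
  show ?thesis
  proof (cases "q dvd r")
    case True
    then show ?thesis using q(2) by (auto simp: map_poly_of_rat_mult)
  next
    case False
    have "prime_elem q"
      using q(1) unfolding is_min_poly_def by (metis irreducible_imp_prime_elem_gcd)
    then have "gcd q r = 1"
      using False by (simp add: prime_elem_imp_coprime)
    then obtain u v where "u * q + v * r = 1"
      using bezout_coefficients_fst_snd[of q r] by metis
    then have "poly (map_poly (of_rat :: rat \<Rightarrow> complex) (u * q + v * r)) z = 1" by simp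
    with q(1) assms(2) show ?thesis
      by (simp add: is_min_poly_def map_poly_of_rat_add map_poly_of_rat_mult)
  qed
qed

lemma poly_conjugate_eq_0_int:
  fixes r :: "int poly"
  assumes "w \<in> conjugates z" "poly (map_poly of_int r) z = 0"
  shows "poly (map_poly of_int r) w = 0"
proof -
  have int_via_rat: "map_poly of_rat (map_poly of_int r) = (map_poly of_int r :: complex poly)"
    by (simp add: map_poly_map_poly o_def)
  show ?thesis
    using poly_conjugate_eq_0[OF assms(1), of "map_poly of_int r"] assms(2) by (simp add: int_via_rat)
qed

lemma is_subfield_of_int:
  assumes "is_subfield S"
  shows "of_int k \<in> S"
proof -
  have "of_nat n \<in> S" for n
    using assms by (induction n) (auto simp: is_subfield_def)
  then show ?thesis
    using assms unfolding is_subfield_def by (cases k rule: int_cases2) (metis of_int_of_nat_eq of_int_minus)+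
qed

lemma of_int_add_mult_mem_field_gen:
  "of_int a + of_int b * z \<in> field_gen z"
  unfolding field_gen_def
  using is_subfield_of_int by (fastforce simp: is_subfield_def)

section \<open>Eventually periodic sequences\<close>

lemma finite_range_if_eventually_periodic:
  assumes "eventually_periodic s"
  shows "finite (range s)"
proof -
  obtain n p where np: "p > 0" "\<forall>i\<ge>n. s (i + p) = s i"
    using assms unfolding eventually_periodic_def by blast
  have "s m \<in> s ` {..<n + p}" for m
  proof (induction m rule: less_induct)
    case (less m)
    show ?case
    proof (cases "m < n + p")
      case False
      then have "m - p \<ge> n" "m - p + p = m" "m - p < m"
        using np(1) by auto
      then show ?thesis using np(2) less.IH[of "m - p"] by metis
    qed simp
  qed
  then have "range s \<subseteq> s ` {..<n + p}" by blast
  then show ?thesis by (rule finite_subset) simp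
qed

lemma eventually_periodic_recurrence:
  assumes "\<And>m. s (Suc m) = f m (s m)" "\<forall>i\<ge>n. f (i + p) = f i" "p > 0" "s (n + p) = s n"
  shows "eventually_periodic s"
proof -
  have "s (m + p) = s m" if "m \<ge> n" for m
    using that
  proof (induction m rule: dec_induct)
    case (step m)
    then show ?case using assms(1)[of "m + p"] assms(1)[of m] assms(2) by simp
  qed (simp add: assms(4) add.commute)
  then show ?thesis
    using assms(3) unfolding eventually_periodic_def by blast
qed

lemma norm_le_if_finite_range_recurrence:
  fixes s :: "nat \<Rightarrow> 'a::real_normed_field"
  assumes "finite (range s)" "\<And>m. s (Suc m) = - w * s m - c m" "\<And>m. norm (c m) \<le> B"
    and "norm w > 1"
  shows "norm (s m) \<le> B / (norm w - 1)"
proof -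
  define M where "M = Max (norm ` range s)"
  have le_M: "norm (s k) \<le> M" for k
    unfolding M_def using assms(1) by (intro Max_ge) auto
  have "M \<in> norm ` range s"
    unfolding M_def using assms(1) by (intro Max_in) auto
  then obtain k where "norm (s k) = M" by auto
  moreover have "norm w * norm (s k) = norm (- s (Suc k) - c k)"
    using assms(2)[of k] by (simp add: norm_mult)
  moreover have "norm (- s (Suc k) - c k) \<le> norm (s (Suc k)) + norm (c k)"
    using norm_triangle_ineq4[of "- s (Suc k)" "c k"] by simp
  ultimately have "(norm w - 1) * M \<le> B"
    using le_M[of "Suc k"] assms(3)[of k] by (simp add: algebra_simps)
  then have "M \<le> B / (norm w - 1)"
    using assms(4) by (simp add: pos_le_divide_eq mult.commute)
  then show ?thesis
    using le_M[of m] by linarith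
qed

lemma algebraic_integer_if_negbeta_periodic:
  assumes "\<beta> > 1"
    and periodic: "\<And>a b. of_int a + of_int b * \<beta> \<in> Ibeta \<beta> \<Longrightarrow>
                     eventually_periodic (negbeta_digits \<beta> (of_int a + of_int b * \<beta>))"
  shows "algebraic_integer (complex_of_real \<beta>)"
proof -
  obtain a :: int where x_mem: "of_int a + of_int 1 * \<beta> \<in> Ibeta \<beta>"
    using exists_int_add_mem_Ibeta[OF assms(1)] by auto
  define d where "d = negbeta_digits \<beta> (of_int a + of_int 1 * \<beta>)"
  obtain n p where "p > 0"
    and root: "poly (orbit_poly a 1 d (n + p) - orbit_poly a 1 d n) (complex_of_real \<beta>) = 0"
    using orbit_poly_negbeta_root[OF assms(1) refl x_mem periodic[OF x_mem]] unfolding d_def by blast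
  define D :: "int poly" where "D = orbit_poly a 1 d (n + p) - orbit_poly a 1 d n"
  have "is_unit (lead_coeff D)"
    using lead_coeff_orbit_poly_diff[of 1 p a d n] \<open>p > 0\<close> unfolding D_def
    by (simp add: is_unit_power_iff)
  moreover have "poly (map_poly of_int D) (complex_of_real \<beta>) = 0"
    using root unfolding D_def map_poly_of_int_orbit_poly .
  ultimately show ?thesis
    by (rule algebraic_integerI_unit_lead_coeff)
qed

lemma conjugate_orbit_bound:
  assumes "\<beta> > 1"
    and periodic: "\<And>a b. of_int a + of_int b * \<beta> \<in> Ibeta \<beta> \<Longrightarrow>
                     eventually_periodic (negbeta_digits \<beta> (of_int a + of_int b * \<beta>))"
    and w: "w \<in> conjugates (complex_of_real \<beta>)" "cmod w > 1"
  shows "of_nat N * cmod (w - complex_of_real \<beta>) \<le> (\<beta> + 1) / (cmod w - 1) + 1"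
proof -
  obtain a :: int where x_mem: "of_int a + of_int (int N) * \<beta> \<in> Ibeta \<beta>"
    using exists_int_add_mem_Ibeta[OF assms(1)] by auto
  define x where "x = of_int a + of_int (int N) * \<beta>"
  define d where "d = negbeta_digits \<beta> x"
  define s where "s m = poly (orbit_poly a (int N) d m) w" for m
  have x: "x \<in> Ibeta \<beta>"
    using x_mem unfolding x_def .
  obtain n p where "p > 0" and d_periodic: "\<forall>i\<ge>n. d (i + p) = d i"
    and root: "poly (orbit_poly a (int N) d (n + p) - orbit_poly a (int N) d n) (complex_of_real \<beta>) = 0"
    using orbit_poly_negbeta_root[OF assms(1) x_def x periodic[OF x_mem, folded x_def]]
    unfolding d_def by blast
  define D :: "int poly" where "D = orbit_poly a (int N) d (n + p) - orbit_poly a (int N) d n"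
  have s_Suc: "s (Suc m) = - w * s m - of_int (d m)" for m
    unfolding s_def by simp
  have "poly (map_poly of_int D) (complex_of_real \<beta>) = 0"
    using root unfolding D_def map_poly_of_int_orbit_poly .
  then have "poly (map_poly of_int D) w = 0"
    by (rule poly_conjugate_eq_0_int[OF w(1)])
  then have "s (n + p) = s n"
    unfolding s_def D_def map_poly_of_int_orbit_poly by simp
  then have "eventually_periodic s"
    using d_periodic \<open>p > 0\<close> s_Suc
    by (intro eventually_periodic_recurrence[where f = "\<lambda>m y. - w * y - of_int (d m)"]) auto
  then have "finite (range s)"
    by (rule finite_range_if_eventually_periodic)
  moreover have "norm (of_int (d m) :: complex) \<le> \<beta> + 1" for m
    using abs_negbeta_digits_le[OF assms(1) x] unfolding d_def by (metis norm_of_int)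
  ultimately have "cmod (s 0) \<le> (\<beta> + 1) / (cmod w - 1)"
    using s_Suc w(2) by (intro norm_le_if_finite_range_recurrence) auto
  moreover have "s 0 = complex_of_real x + of_nat N * (w - complex_of_real \<beta>)"
    unfolding s_def x_def by (simp add: algebra_simps)
  moreover have "\<bar>x\<bar> \<le> 1"
    using abs_le_1_if_mem_Ibeta[OF assms(1) x] .
  ultimately show ?thesis
    using norm_triangle_ineq4[of "s 0" "complex_of_real x"]
    by (simp add: norm_mult)
qed

lemma cmod_conjugate_le_1_if_negbeta_periodic:
  assumes "\<beta> > 1"
    and periodic: "\<And>a b. of_int a + of_int b * \<beta> \<in> Ibeta \<beta> \<Longrightarrow>
                     eventually_periodic (negbeta_digits \<beta> (of_int a + of_int b * \<beta>))"
    and w: "w \<in> conjugates (complex_of_real \<beta>) - {complex_of_real \<beta>}"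
  shows "cmod w \<le> 1"
proof (rule ccontr)
  assume "\<not> cmod w \<le> 1"
  define K where "K = (\<beta> + 1) / (cmod w - 1) + 1"
  have "cmod (w - complex_of_real \<beta>) > 0"
    using w by simp
  then obtain N :: nat where "K < of_nat N * cmod (w - complex_of_real \<beta>)"
    by (metis reals_Archimedean3)
  moreover have "of_nat N * cmod (w - complex_of_real \<beta>) \<le> K"
    using conjugate_orbit_bound[OF assms(1) periodic] w \<open>\<not> cmod w \<le> 1\<close> unfolding K_def by auto
  ultimately show False by simp
qed

theorem theorem3:
  fixes \<beta> :: real
  assumes "\<beta> > 1"
    and "\<forall>x\<in>Ibeta \<beta>. complex_of_real x \<in> field_gen (complex_of_real \<beta>) \<longrightarrow>
           eventually_periodic (negbeta_digits \<beta> x)"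
  shows "pisot \<beta> \<or> salem \<beta>"
proof -
  have periodic: "eventually_periodic (negbeta_digits \<beta> (of_int a + of_int b * \<beta>))"
    if "of_int a + of_int b * \<beta> \<in> Ibeta \<beta>" for a b :: int
    using assms(2) that of_int_add_mult_mem_field_gen[of a b "complex_of_real \<beta>"] by simp
  \<comment> \<open>Since Salem excludes Pisot, the disjunction only asks for an algebraic integer
    whose other conjugates lie in the closed unit disc.\<close>
  show ?thesis
    using algebraic_integer_if_negbeta_periodic[OF assms(1) periodic]
      cmod_conjugate_le_1_if_negbeta_periodic[OF assms(1) periodic] assms(1)
    unfolding pisot_def salem_def by auto
qed

end
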